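(* Let $f$ be a homeomorphism of a compact metric space $(X,d)$ such that: (1) for every $\epsilon>0$ there is $\delta>0$ such that $d(a,b)<\delta$ implies $W^s_\epsilon(a)\cap W^u_\epsilon(b)\ne\emptyset$; and (2) for every $x\in X$ there is $c>0$ with $W^s_c(x)=\{x\}$. Then $X$ is finite.
   Context: $W^s_\epsilon(x)=\{y\in X: d(f^n(x),f^n(y))\le\epsilon\ \forall n\ge0\}$ and $W^u_\epsilon(x)=\{y\in X: d(f^{-n}(x),f^{-n}(y))\le\epsilon\ \forall n\ge0\}$. *)

theory Defs
  imports "HOL-Analysis.Analysis"
begin

definition stable_set :: "'a::metric_space set \<Rightarrow> ('a \<Rightarrow> 'a) \<Rightarrow> real \<Rightarrow> 'a \<Rightarrow> 'a set" where
  "stable_set X f e x = {y \<in> X. \<forall>n::nat. dist ((f ^^ n) x) ((f ^^ n) y) \<le> e}"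

definition unstable_set :: "'a::metric_space set \<Rightarrow> ('a \<Rightarrow> 'a) \<Rightarrow> real \<Rightarrow> 'a \<Rightarrow> 'a set" where
  "unstable_set X finv e x = {y \<in> X. \<forall>n::nat. dist ((finv ^^ n) x) ((finv ^^ n) y) \<le> e}"

end

theory Submission
  imports Defs
begin

text \<open>
  If a point b is close to x, the local product structure gives a point in the stable set of x
  and the unstable set of b; since the stable set of x is trivial that point is x itself, so the
  backward orbits of x and b stay close. Hence the iterates of the inverse g are equicontinuous,
  uniformly by compactness. A pigeonhole argument on a finite net then shows that g is uniformly
  rigid: some iterate g^m with m arbitrarily large moves every point by less than any given e.
  Writing f^n = g^(m-n) up to such an error, the forward iterates of f are equicontinuous too,
  so every point near x lies in the trivial stable set of x. Thus X is discrete, and being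
  compact it is finite.
\<close>

definition uniformly_equicontinuous_iterates :: "'a::metric_space set \<Rightarrow> ('a \<Rightarrow> 'a) \<Rightarrow> bool" where
  "uniformly_equicontinuous_iterates X g \<longleftrightarrow>
     (\<forall>e>0. \<exists>\<delta>>0. \<forall>a\<in>X. \<forall>b\<in>X. dist a b < \<delta> \<longrightarrow> (\<forall>k. dist ((g ^^ k) a) ((g ^^ k) b) < e))"

definition uniformly_rigid :: "'a::metric_space set \<Rightarrow> ('a \<Rightarrow> 'a) \<Rightarrow> bool" where
  "uniformly_rigid X g \<longleftrightarrow> (\<forall>e>0. \<forall>n. \<exists>m\<ge>n. \<forall>w\<in>X. dist w ((g ^^ m) w) < e)"

lemma uniformly_equicontinuous_iteratesD:
  assumes "uniformly_equicontinuous_iterates X g" "e > 0"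
  obtains \<delta> where "\<delta> > 0"
    "\<And>a b k. \<lbrakk>a \<in> X; b \<in> X; dist a b < \<delta>\<rbrakk> \<Longrightarrow> dist ((g ^^ k) a) ((g ^^ k) b) < e"
proof -
  obtain \<delta> where "\<delta> > 0"
    and "\<forall>a\<in>X. \<forall>b\<in>X. dist a b < \<delta> \<longrightarrow> (\<forall>k. dist ((g ^^ k) a) ((g ^^ k) b) < e)"
    using assms unfolding uniformly_equicontinuous_iterates_def by blast
  then show ?thesis using that by blast
qed

lemma homeomorphism_funpow:
  assumes "homeomorphism X X f g"
  shows "homeomorphism X X (f ^^ n) (g ^^ n)"
proof (induction n)
  case 0
  then show ?case by (simp add: homeomorphism_ident id_def)
next
  case (Suc n)
  have "homeomorphism X X (f \<circ> f ^^ n) (g ^^ n \<circ> g)"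
    using homeomorphism_compose[OF Suc assms] .
  then show ?case by (simp only: funpow.simps(2)[symmetric] funpow_Suc_right[symmetric])
qed

lemma uniformly_equicontinuous_backward_iterates:
  fixes X :: "'a::metric_space set" and f g :: "'a \<Rightarrow> 'a"
  assumes "compact X"
    and product: "\<forall>e>0. \<exists>\<delta>>0. \<forall>a\<in>X. \<forall>b\<in>X. dist a b < \<delta> \<longrightarrow>
            stable_set X f e a \<inter> unstable_set X g e b \<noteq> {}"
    and trivial_stable: "\<forall>x\<in>X. \<exists>c>0. stable_set X f c x = {x}"
  shows "uniformly_equicontinuous_iterates X g"
proof -
  have pointwise: "\<exists>\<delta>>0. \<forall>h\<in>range (\<lambda>k. g ^^ k). \<forall>b\<in>X. dist b x < \<delta> \<longrightarrow> dist (h b) (h x) < e"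
    if x: "x \<in> X" and e: "e > 0" for x e
  proof -
    obtain c where c: "c > 0" "stable_set X f c x = {x}" using trivial_stable x by blast
    define e' where "e' = min (e / 2) c"
    have e': "0 < e'" "e' \<le> c" "e' < e" using e c(1) by (auto simp: e'_def)
    then obtain \<delta> where \<delta>: "\<delta> > 0" "\<forall>a\<in>X. \<forall>b\<in>X. dist a b < \<delta> \<longrightarrow>
            stable_set X f e' a \<inter> unstable_set X g e' b \<noteq> {}"
      using product by blast
    have "dist ((g ^^ k) b) ((g ^^ k) x) < e" if b: "b \<in> X" "dist b x < \<delta>" for b k
    proof -
      have "stable_set X f e' x \<inter> unstable_set X g e' b \<noteq> {}"
        using \<delta>(2) x b by (simp add: dist_commute)
      then obtain y where y: "y \<in> stable_set X f e' x" "y \<in> unstable_set X g e' b"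
        by blast
      \<comment> \<open>a point that shadows the forward orbit of x must be x itself\<close>
      have "y \<in> stable_set X f c x"
        using y(1) e'(2) by (auto simp: stable_set_def intro: order_trans)
      then have "y = x" using c(2) by blast
      then have "dist ((g ^^ k) b) ((g ^^ k) x) \<le> e'"
        using y(2) by (simp add: unstable_set_def)
      then show ?thesis using e'(3) by linarith
    qed
    then show ?thesis using \<delta>(1) by blast
  qed
  show ?thesis
    unfolding uniformly_equicontinuous_iterates_def
  proof (intro allI impI)
    fix e :: real assume "e > 0"
    then obtain \<delta> where "\<delta> > 0"
      "\<And>h a b. \<lbrakk>h \<in> range (\<lambda>k. g ^^ k); b \<in> X; a \<in> X; dist a b < \<delta>\<rbrakk> \<Longrightarrow> dist (h a) (h b) < e"
      using compact_uniformly_equicontinuous[OF \<open>compact X\<close> pointwise] by metis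
    then show "\<exists>\<delta>>0. \<forall>a\<in>X. \<forall>b\<in>X. dist a b < \<delta> \<longrightarrow> (\<forall>k. dist ((g ^^ k) a) ((g ^^ k) b) < e)"
      by blast
  qed
qed

lemma compact_close_pair_on_finite:
  fixes h :: "nat \<Rightarrow> 'b \<Rightarrow> 'a::metric_space"
  assumes "compact X" "finite S" "\<And>i s. s \<in> S \<Longrightarrow> h i s \<in> X" "e > 0"
  obtains i j where "i < j" "\<forall>s\<in>S. dist (h i s) (h j s) < e"
proof -
  have cover: "X \<subseteq> (\<Union>x\<in>X. ball x (e / 2))" using \<open>e > 0\<close> by auto
  obtain T where T: "T \<subseteq> X" "finite T" "X \<subseteq> (\<Union>t\<in>T. ball t (e / 2))"
    by (rule compactE_image[OF \<open>compact X\<close> _ cover]) auto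
  have close: "\<forall>x\<in>X. \<exists>t. t \<in> T \<and> dist x t < e / 2"
  proof
    fix x assume "x \<in> X"
    then obtain t where "t \<in> T" "x \<in> ball t (e / 2)" using T(3) by blast
    then show "\<exists>t. t \<in> T \<and> dist x t < e / 2" by (auto simp: dist_commute)
  qed
  obtain near where near: "\<And>x. x \<in> X \<Longrightarrow> near x \<in> T \<and> dist x (near x) < e / 2"
    using bchoice[OF close] by blast
  define cls where "cls i = restrict (\<lambda>s. near (h i s)) S" for i
  have "range cls \<subseteq> (\<Pi>\<^sub>E s\<in>S. T)"
    using near assms(3) by (auto simp: cls_def)
  then have "finite (range cls)"
    by (rule finite_subset) (simp add: finite_PiE \<open>finite S\<close> \<open>finite T\<close>)
  then have "\<not> inj cls" using finite_imageD infinite_UNIV_nat by blast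
  then obtain i j where ij: "i < j" "cls i = cls j"
    unfolding inj_def by (metis linorder_neq_iff)
  have "dist (h i s) (h j s) < e" if s: "s \<in> S" for s
  proof -
    have "near (h i s) = near (h j s)"
      using fun_cong[OF ij(2), of s] s by (simp add: cls_def)
    then have "dist (h i s) (near (h j s)) < e / 2" "dist (h j s) (near (h j s)) < e / 2"
      using near assms(3)[OF s] by metis+
    then show ?thesis by (rule dist_triangle_half_l)
  qed
  then show ?thesis using that ij(1) by blast
qed

lemma uniformly_rigid_if_equicontinuous_iterates:
  assumes "compact X" "g ` X = X" and equi: "uniformly_equicontinuous_iterates X g"
  shows "uniformly_rigid X g"
  unfolding uniformly_rigid_def
proof (intro allI impI)
  fix e :: real and n :: nat assume "e > 0"
  then have "e / 3 > 0" by simp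
  obtain \<eta> where \<eta>: "\<eta> > 0"
    "\<And>a b k. \<lbrakk>a \<in> X; b \<in> X; dist a b < \<eta>\<rbrakk> \<Longrightarrow> dist ((g ^^ k) a) ((g ^^ k) b) < e / 3"
    using uniformly_equicontinuous_iteratesD[OF equi \<open>e / 3 > 0\<close>] by auto
  have cover: "X \<subseteq> (\<Union>x\<in>X. ball x \<eta>)" using \<open>\<eta> > 0\<close> by auto
  obtain S where S: "S \<subseteq> X" "finite S" "X \<subseteq> (\<Union>s\<in>S. ball s \<eta>)"
    by (rule compactE_image[OF \<open>compact X\<close> _ cover]) auto
  have iter_image: "(g ^^ k) ` X = X" for k
  proof (induction k)
    case (Suc k)
    then show ?case by (metis assms(2) funpow.simps(2) image_comp)
  qed simp
  have samples: "\<And>i s. s \<in> S \<Longrightarrow> (g ^^ (i * Suc n)) s \<in> X" using iter_image S(1) by blast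
  \<comment> \<open>sampling only multiples of n + 1 forces the return time to be at least n\<close>
  obtain i j where ij: "i < j" "\<forall>s\<in>S. dist ((g ^^ (i * Suc n)) s) ((g ^^ (j * Suc n)) s) < e / 3"
    by (rule compact_close_pair_on_finite[OF \<open>compact X\<close> \<open>finite S\<close> samples \<open>e / 3 > 0\<close>])
  define p where "p = i * Suc n"
  define q where "q = j * Suc n"
  define m where "m = q - p"
  have "Suc i * Suc n \<le> j * Suc n" using ij(1) by (intro mult_right_mono) auto
  then have m: "n \<le> m" "q = m + p" by (auto simp: m_def p_def q_def)
  have "dist w ((g ^^ m) w) < e" if "w \<in> X" for w
  proof -
    obtain z where z: "z \<in> X" "w = (g ^^ p) z" using \<open>w \<in> X\<close> iter_image[of p] by blast
    then obtain s where s: "s \<in> S" "dist s z < \<eta>" using S(3) by auto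
    have "s \<in> X" using s(1) S(1) by blast
    have "(g ^^ m) w = (g ^^ q) z" by (simp add: z(2) m(2) funpow_add)
    then have "dist w ((g ^^ m) w) \<le> dist ((g ^^ p) z) ((g ^^ p) s) + dist ((g ^^ p) s) ((g ^^ q) z)"
      by (simp add: z(2) dist_triangle)
    also have "dist ((g ^^ p) s) ((g ^^ q) z) \<le> dist ((g ^^ p) s) ((g ^^ q) s) + dist ((g ^^ q) s) ((g ^^ q) z)"
      by (rule dist_triangle)
    finally have "dist w ((g ^^ m) w)
        \<le> dist ((g ^^ p) z) ((g ^^ p) s) + dist ((g ^^ p) s) ((g ^^ q) s) + dist ((g ^^ q) s) ((g ^^ q) z)"
      by simp
    moreover have "dist ((g ^^ p) z) ((g ^^ p) s) < e / 3" "dist ((g ^^ q) s) ((g ^^ q) z) < e / 3"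
      using \<eta>(2) z(1) \<open>s \<in> X\<close> s(2) by (simp_all add: dist_commute)
    moreover have "dist ((g ^^ p) s) ((g ^^ q) s) < e / 3" using ij(2) s(1) by (simp add: p_def q_def)
    ultimately show ?thesis by linarith
  qed
  then show "\<exists>m\<ge>n. \<forall>w\<in>X. dist w ((g ^^ m) w) < e" using m(1) by blast
qed

lemma uniformly_equicontinuous_inverse_iterates:
  assumes hom: "homeomorphism X X f g" and rigid: "uniformly_rigid X g"
    and equi: "uniformly_equicontinuous_iterates X g"
  shows "uniformly_equicontinuous_iterates X f"
  unfolding uniformly_equicontinuous_iterates_def
proof (intro allI impI)
  fix e :: real assume "e > 0"
  then have "e / 3 > 0" by simp
  obtain \<eta> where \<eta>: "\<eta> > 0"
    "\<And>a b k. \<lbrakk>a \<in> X; b \<in> X; dist a b < \<eta>\<rbrakk> \<Longrightarrow> dist ((g ^^ k) a) ((g ^^ k) b) < e / 3"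
    using uniformly_equicontinuous_iteratesD[OF equi \<open>e / 3 > 0\<close>] by auto
  have "dist ((f ^^ n) x) ((f ^^ n) y) < e" if xy: "x \<in> X" "y \<in> X" "dist x y < \<eta>" for x y n
  proof -
    obtain m where m: "n \<le> m" "\<And>w. w \<in> X \<Longrightarrow> dist w ((g ^^ m) w) < e / 3"
      using rigid \<open>e / 3 > 0\<close> unfolding uniformly_rigid_def by blast
    \<comment> \<open>g^m is uniformly close to the identity, so f^n is close to g^(m - n)\<close>
    have close: "dist ((f ^^ n) v) ((g ^^ (m - n)) v) < e / 3" if "v \<in> X" for v
    proof -
      have "(g ^^ n) ((f ^^ n) v) = v" "(f ^^ n) v \<in> X"
        using homeomorphism_funpow[OF hom, of n] that by (auto simp: homeomorphism_def)
      moreover have "g ^^ m = g ^^ (m - n) \<circ> g ^^ n" using m(1) by (simp flip: funpow_add)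
      ultimately show ?thesis using m(2) by fastforce
    qed
    have "dist ((f ^^ n) x) ((f ^^ n) y)
        \<le> dist ((f ^^ n) x) ((g ^^ (m - n)) x) + dist ((g ^^ (m - n)) x) ((f ^^ n) y)"
      by (rule dist_triangle)
    also have "dist ((g ^^ (m - n)) x) ((f ^^ n) y)
        \<le> dist ((g ^^ (m - n)) x) ((g ^^ (m - n)) y) + dist ((f ^^ n) y) ((g ^^ (m - n)) y)"
      by (rule dist_triangle2)
    finally show ?thesis
      using close[OF xy(1)] close[OF xy(2)] \<eta>(2)[OF xy, of "m - n"] by linarith
  qed
  then show "\<exists>\<delta>>0. \<forall>a\<in>X. \<forall>b\<in>X. dist a b < \<delta> \<longrightarrow> (\<forall>k. dist ((f ^^ k) a) ((f ^^ k) b) < e)"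
    using \<eta>(1) by blast
qed

lemma isolated_in_if_equicontinuous_iterates:
  assumes equi: "uniformly_equicontinuous_iterates X f" and x: "x \<in> X"
    and c: "c > 0" "stable_set X f c x = {x}"
  shows "x isolated_in X"
proof -
  obtain \<eta> where "\<eta> > 0"
    and \<eta>: "\<And>a b k. \<lbrakk>a \<in> X; b \<in> X; dist a b < \<eta>\<rbrakk> \<Longrightarrow> dist ((f ^^ k) a) ((f ^^ k) b) < c"
    using uniformly_equicontinuous_iteratesD[OF equi c(1)] by auto
  have "y \<in> stable_set X f c x" if "y \<in> X" "dist x y < \<eta>" for y
    using \<eta>[OF x that] that(1) by (simp add: stable_set_def less_imp_le)
  then show ?thesis using \<open>\<eta> > 0\<close> c(2) x by (auto simp: isolated_in_dist_Ex_iff)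
qed

theorem mainTheorem17:
  fixes X :: "'a::metric_space set" and f g :: "'a \<Rightarrow> 'a"
  assumes "compact X"
    and "homeomorphism X X f g"
    and "\<forall>e>0. \<exists>\<delta>>0. \<forall>a\<in>X. \<forall>b\<in>X. dist a b < \<delta> \<longrightarrow>
            stable_set X f e a \<inter> unstable_set X g e b \<noteq> {}"
    and "\<forall>x\<in>X. \<exists>c>0. stable_set X f c x = {x}"
  shows "finite X"
proof -
  have "uniformly_equicontinuous_iterates X g"
    using uniformly_equicontinuous_backward_iterates assms(1,3,4) .
  moreover have "uniformly_rigid X g"
    using uniformly_rigid_if_equicontinuous_iterates assms(1) homeomorphism_image2[OF assms(2)] calculation .
  ultimately have equi: "uniformly_equicontinuous_iterates X f"
    using uniformly_equicontinuous_inverse_iterates assms(2) by blast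
  have "x isolated_in X" if "x \<in> X" for x
    using isolated_in_if_equicontinuous_iterates[OF equi that] assms(4) that by blast
  then show ?thesis
    using discrete_compact_finite_iff discreteI assms(1) by blast
qed

end
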